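(* Let $(\mathcal{A},\theta^* )$ be any instance satisfying the standing assumptions, with available action set $\mathcal{A}_t=\mathcal{A}$ in every round, let $C>0$ be a constant and $\beta\in[\tfrac14,\tfrac12]$. Assume the exploitation subroutine $f$ is a combinatorial linear semi-bandit policy (e.g. CombLinUCB) whose regret accumulated over the rounds in which it is invoked is $\tilde{\mathcal{O}}(kd\sqrt{T})$. Then InfluenceCB with parameters $\beta$ and threshold constant $C_t=C$ satisfies $$\mathrm{Regret}_T(\mathrm{InfluenceCB},\mathcal{A},\theta^* )\in\tilde{\mathcal{O}}(T^{2\beta}),\qquad \mathrm{RMSE}_T(\mathrm{InfluenceCB},\mathcal{A},\theta^* )\in\tilde{\mathcal{O}}(T^{-\beta}),$$ where $\tilde{\mathcal{O}}$ hides constants (depending on $M,k,d,C,c,c',\lambda$) and logarithmic factors.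
   Context: Setting: fixed action set $\mathcal{A}=\{X_1,\dots,X_M\}\subseteq\mathbb{R}^d$ spanning $\mathbb{R}^d$, $\|X\|_2\le c$, unknown $\theta^*$ with $\|\theta^*\|_2\le c'$ and $X^\top\theta^*\in[0,1]$; in each round $t=1,\dots,T$ the agent selects $k$ distinct actions $X_{t,1},\dots,X_{t,k}\in\mathcal{A}$ and observes independent binary rewards with $\mathbb{E}[r_{t,i}]=X_{t,i}^\top\theta^*$. For $\lambda>0$, $V_t=\lambda I+\sum_{s=1}^t\sum_{r=1}^kX_{s,r}X_{s,r}^\top$ ($V_0=\lambda I$) and $\hat\theta_t=V_t^{-1}\sum_{s\le t}\sum_{r=1}^k r_{s,r}X_{s,r}$ (ridge estimator). Algorithm InfluenceCB: at round $t$, compute $U_t(X)=\sqrt{X^\top V_{t-1}^{-1}X}$ for all $X\in\mathcal{A}$ and $u_t=\max_{X\in\mathcal{A}}U_t(X)$. If $u_t>C/t^\beta$ (exploration round), select the $k$ actions with the largest $U_t(X)$; otherwise (exploitation round) select the $k$ actions prescribed by the subroutine $f$ given the history. Then observe rewards and update $V_t,\hat\theta_t$. Regret: $\mathrm{Regret}_T=\mathbb{E}\big[\sum_{t=1}^T(\sum_{X\in\mathcal{E}^*}X^\top\theta^*-\sum_{i=1}^kX_{t,i}^\top\theta^* )\big]$ where $\mathcal{E}^*$ is a set of $k$ actions with largest $X^\top\theta^*$. RMSE: $\mathrm{RMSE}_T=\mathbb{E}\Big[\sqrt{\tfrac1M\sum_{X\in\mathcal{A}}(X^\top(\hat\theta_T-\theta^*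 ))^2}\Big]$. *)

theory Defs
  imports "HOL-Analysis.Analysis" "HOL-Probability.Probability" "HOL-Library.Landau_Symbols"
begin

(* A round record: the set S_t of k selected actions and the observed binary rewards
   (the reward function is only meaningful on S_t; it is False outside S_t). *)
type_synonym 'd round = "(real^'d) set \<times> ((real^'d) \<Rightarrow> bool)"
type_synonym 'd hist = "'d round list"

definition outer :: "real^'d \<Rightarrow> real^'d^'d" where
  "outer x = (\<chi> i j. x $ i * x $ j)"

definition Vmat :: "real \<Rightarrow> 'd hist \<Rightarrow> real^'d^'d" where
  "Vmat lam h = mat lam + (\<Sum>i<length h. \<Sum>x\<in>fst (h ! i). outer x)"

definition theta_hat :: "real \<Rightarrow> 'd hist \<Rightarrow> real^'d" where
  "theta_hat lam h = matrix_inv (Vmat lam h) *v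
      (\<Sum>i<length h. \<Sum>x\<in>fst (h ! i). of_bool (snd (h ! i) x) *\<^sub>R x)"

(* U_t(X) = sqrt (X^T V_{t-1}^{-1} X), where h is the history of the first t-1 rounds *)
definition Ucb :: "real \<Rightarrow> 'd hist \<Rightarrow> real^'d \<Rightarrow> real" where
  "Ucb lam h x = sqrt (x \<bullet> (matrix_inv (Vmat lam h) *v x))"

(* round t = length h + 1 is an exploration round iff u_t > C / t^beta *)
definition explore :: "(real^'d) set \<Rightarrow> real \<Rightarrow> real \<Rightarrow> real \<Rightarrow> 'd hist \<Rightarrow> bool" where
  "explore A lam C beta h \<longleftrightarrow>
     Max (Ucb lam h ` A) > C / (real (length h + 1) powr beta)"

definition top_k :: "(real^'d) set \<Rightarrow> nat \<Rightarrow> (real^'d \<Rightarrow> real) \<Rightarrow> (real^'d) set \<Rightarrow> bool" where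
  "top_k A k U S \<longleftrightarrow> S \<subseteq> A \<and> card S = k \<and> (\<forall>x\<in>S. \<forall>y\<in>A - S. U y \<le> U x)"

(* pol is (a deterministic instance of) InfluenceCB with exploitation subroutine f,
   threshold constant C and exponent beta; tie-breaking in exploration is arbitrary *)
definition influenceCB :: "(real^'d) set \<Rightarrow> nat \<Rightarrow> real \<Rightarrow> real \<Rightarrow> real \<Rightarrow>
     ('d hist \<Rightarrow> (real^'d) set) \<Rightarrow> ('d hist \<Rightarrow> (real^'d) set) \<Rightarrow> bool" where
  "influenceCB A k lam C beta f pol \<longleftrightarrow>
     (\<forall>h. (explore A lam C beta h \<longrightarrow> top_k A k (Ucb lam h) (pol h)) \<and>
          (\<not> explore A lam C beta h \<longrightarrow> pol h = f h))"

fun hist_pmf :: "(real^'d) \<Rightarrow> ('d hist \<Rightarrow> (real^'d) set) \<Rightarrow> nat \<Rightarrow> 'd hist pmf" where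
  "hist_pmf th pol 0 = return_pmf []"
| "hist_pmf th pol (Suc t) =
     do { h \<leftarrow> hist_pmf th pol t;
          r \<leftarrow> Pi_pmf (pol h) False (\<lambda>x. bernoulli_pmf (x \<bullet> th));
          return_pmf (h @ [(pol h, r)]) }"

definition opt_val :: "(real^'d) set \<Rightarrow> nat \<Rightarrow> real^'d \<Rightarrow> real" where
  "opt_val A k th = Max {(\<Sum>x\<in>S. x \<bullet> th) | S. S \<subseteq> A \<and> card S = k}"

definition gap :: "(real^'d) set \<Rightarrow> nat \<Rightarrow> real^'d \<Rightarrow> (real^'d) set \<Rightarrow> real" where
  "gap A k th S = opt_val A k th - (\<Sum>x\<in>S. x \<bullet> th)"

definition regret :: "(real^'d) set \<Rightarrow> nat \<Rightarrow> real^'d \<Rightarrow> ('d hist \<Rightarrow> (real^'d) set) \<Rightarrow> nat \<Rightarrow> real" where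
  "regret A k th pol T =
     measure_pmf.expectation (hist_pmf th pol T)
       (\<lambda>h. \<Sum>i<length h. gap A k th (fst (h ! i)))"

definition exploit_regret :: "(real^'d) set \<Rightarrow> nat \<Rightarrow> real \<Rightarrow> real \<Rightarrow> real \<Rightarrow> real^'d \<Rightarrow>
     ('d hist \<Rightarrow> (real^'d) set) \<Rightarrow> nat \<Rightarrow> real" where
  "exploit_regret A k lam C beta th pol T =
     measure_pmf.expectation (hist_pmf th pol T)
       (\<lambda>h. \<Sum>i<length h. if explore A lam C beta (take i h) then 0 else gap A k th (fst (h ! i)))"

definition rmse :: "(real^'d) set \<Rightarrow> real \<Rightarrow> real^'d \<Rightarrow> ('d hist \<Rightarrow> (real^'d) set) \<Rightarrow> nat \<Rightarrow> real" where
  "rmse A lam th pol T =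
     measure_pmf.expectation (hist_pmf th pol T)
       (\<lambda>h. sqrt ((1 / real (card A)) * (\<Sum>x\<in>A. (x \<bullet> (theta_hat lam h - th))\<^sup>2)))"

definition softO :: "(nat \<Rightarrow> real) \<Rightarrow> (nat \<Rightarrow> real) set" where
  "softO g = {F. \<exists>p::nat. F \<in> O(\<lambda>T. g T * (ln (real T)) ^ p)}"

end

theory Submission
  imports Defs "HOL-Real_Asymp.Real_Asymp"
begin

(* Write V for the regularized design matrix and call x^T V^-1 x the squared width of an action
   x.  Once an action has been played m times its squared width is at most 1/m.  Hence only
   O(M T^(2 beta) / C^2) rounds can select an action of squared width above C^2 / T^(2 beta); this
   bounds the number of exploration rounds, and with it the regret outside the exploitation
   rounds.  Conversely, an action whose squared width after T >= 4M rounds exceeded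
   (2 C^2 + 4M) / T^(2 beta) would have forced exploration in each of the last T/2 rounds, which
   is too many.  Finally theta_hat - theta = V^-1 (S - lam theta), where S is the accumulated
   reward noise, so by Cauchy-Schwarz each squared prediction error is at most the squared width
   times S^T V^-1 S, and the latter has expectation at most k M H_T by a supermartingale
   argument (the elliptical potential). *)

section \<open>Quadratic forms of the regularized design matrix\<close>

text \<open>Everything about \<open>V\<^sup>-\<^sup>1\<close> is derived from the variational formula
  \<open>inv_quad lam h y = max\<^sub>w (2 y\<^sup>T w - w\<^sup>T V w)\<close>, attained at \<open>w = V\<^sup>-\<^sup>1 y\<close>.\<close>

definition design_form :: "real \<Rightarrow> 'd hist \<Rightarrow> real^'d \<Rightarrow> real^'d \<Rightarrow> real" where
  "design_form lam h u w = lam * (u \<bullet> w) + (\<Sum>i<length h. \<Sum>x\<in>fst (h ! i). (x \<bullet> u) * (x \<bullet> w))"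

definition inv_quad :: "real \<Rightarrow> 'd hist \<Rightarrow> real^'d \<Rightarrow> real" where
  "inv_quad lam h y = y \<bullet> (matrix_inv (Vmat lam h) *v y)"

lemma Ucb_eq_sqrt_inv_quad: "Ucb lam h x = sqrt (inv_quad lam h x)"
  by (simp add: Ucb_def inv_quad_def)

lemma sum_matrix_vector_mult: "sum f S *v (z::'a::comm_semiring_1^'n) = (\<Sum>i\<in>S. f i *v z)"
proof (cases "finite S")
  case True
  then show ?thesis
    by (induction S rule: finite_induct) (auto simp: matrix_vector_mult_add_rdistrib)
qed simp

lemma outer_matrix_vector_mult: "outer x *v z = (x \<bullet> z) *\<^sub>R x"
  by (simp add: outer_def matrix_vector_mult_def inner_vec_def vec_eq_iff sum_distrib_left
      mult.commute mult.left_commute)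

lemma mat_matrix_vector_mult: "mat (a::real) *v z = a *\<^sub>R z"
  by (simp add: vec_eq_iff matrix_vector_mult_def mat_def if_distrib[where f="\<lambda>c. c * _"] cong: if_cong)

lemma Vmat_matrix_vector_mult:
  "Vmat lam h *v z = lam *\<^sub>R z + (\<Sum>i<length h. \<Sum>x\<in>fst (h ! i). (x \<bullet> z) *\<^sub>R x)"
  by (simp add: Vmat_def matrix_vector_mult_add_rdistrib sum_matrix_vector_mult
      outer_matrix_vector_mult mat_matrix_vector_mult)

lemma inner_Vmat_mult: "(Vmat lam h *v u) \<bullet> w = design_form lam h u w"
  by (simp add: Vmat_matrix_vector_mult design_form_def inner_add_left inner_sum_left mult.commute)

lemma design_form_commute: "design_form lam h u w = design_form lam h w u"
  by (simp add: design_form_def inner_commute mult.commute)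

lemma design_form_diff:
  "design_form lam h (u - w) (u - w) = design_form lam h u u - 2 * design_form lam h u w + design_form lam h w w"
  by (simp add: design_form_def algebra_simps inner_diff_left inner_diff_right sum.distrib
      sum_subtractf sum_distrib_left inner_commute)

lemma design_form_ge: "0 \<le> lam \<Longrightarrow> lam * (u \<bullet> u) \<le> design_form lam h u u"
  unfolding design_form_def by (auto intro!: sum_nonneg)

lemma design_form_nonneg: "0 \<le> lam \<Longrightarrow> 0 \<le> design_form lam h u u"
  by (meson design_form_ge inner_ge_zero mult_nonneg_nonneg order_trans)

lemma Vmat_matrix_inv:
  assumes "0 < lam"
  shows "Vmat lam h ** matrix_inv (Vmat lam h) = mat 1 \<and> matrix_inv (Vmat lam h) ** Vmat lam h = mat 1"
proof -
  have "inj ((*v) (Vmat lam h))"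
  proof (rule injI)
    fix a b
    assume "Vmat lam h *v a = Vmat lam h *v b"
    then have "design_form lam h (a - b) (a - b) = 0"
      by (metis inner_Vmat_mult inner_zero_left matrix_vector_mult_diff_distrib right_minus_eq)
    then have "lam * ((a - b) \<bullet> (a - b)) \<le> 0"
      using design_form_ge[where lam=lam and h=h and u="a - b"] assms by simp
    with assms have "(a - b) \<bullet> (a - b) \<le> 0"
      by (simp add: mult_le_0_iff)
    then show "a = b"
      by (metis inner_eq_zero_iff inner_ge_zero order_antisym right_minus_eq)
  qed
  then have "invertible (Vmat lam h)"
    using matrix_left_invertible_injective invertible_left_inverse by blast
  then show ?thesis
    unfolding matrix_inv_def invertible_def by (rule someI_ex)
qed

lemma Vmat_inverse_vec:
  assumes "0 < lam"
  shows "Vmat lam h *v (matrix_inv (Vmat lam h) *v y) = y"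
    and "matrix_inv (Vmat lam h) *v (Vmat lam h *v y) = y"
  using Vmat_matrix_inv[OF assms, of h] by (simp_all add: matrix_vector_mul_assoc)

lemma inner_eq_design_form_inv:
  assumes "0 < lam"
  shows "y \<bullet> w = design_form lam h (matrix_inv (Vmat lam h) *v y) w"
  by (metis Vmat_inverse_vec(1)[OF assms] inner_Vmat_mult)

lemma inv_quad_eq_design_form:
  assumes "0 < lam"
  shows "inv_quad lam h y =
    design_form lam h (matrix_inv (Vmat lam h) *v y) (matrix_inv (Vmat lam h) *v y)"
  unfolding inv_quad_def by (rule inner_eq_design_form_inv[OF assms])

lemma inner_inv_Vmat_commute:
  assumes "0 < lam"
  shows "a \<bullet> (matrix_inv (Vmat lam h) *v b) = b \<bullet> (matrix_inv (Vmat lam h) *v a)"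
  by (metis inner_eq_design_form_inv[OF assms] design_form_commute)

lemma inv_quad_nonneg: "0 < lam \<Longrightarrow> 0 \<le> inv_quad lam h y"
  by (simp add: inv_quad_eq_design_form design_form_nonneg)

lemma inv_quad_ge_variational:
  assumes "0 < lam"
  shows "2 * (y \<bullet> w) - design_form lam h w w \<le> inv_quad lam h y"
proof -
  define z where "z = matrix_inv (Vmat lam h) *v y"
  have "0 \<le> design_form lam h (w - z) (w - z)"
    using assms by (simp add: design_form_nonneg)
  moreover have "inv_quad lam h y = design_form lam h z z" "y \<bullet> w = design_form lam h z w"
    unfolding z_def by (rule inv_quad_eq_design_form[OF assms] inner_eq_design_form_inv[OF assms])+
  ultimately show ?thesis
    by (simp add: design_form_diff design_form_commute[of lam h w z])
qed

lemma inv_quad_variational_attained: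
  assumes "0 < lam"
  shows "inv_quad lam h y = 2 * (y \<bullet> (matrix_inv (Vmat lam h) *v y)) -
    design_form lam h (matrix_inv (Vmat lam h) *v y) (matrix_inv (Vmat lam h) *v y)"
  using inv_quad_eq_design_form[OF assms] by (simp add: inv_quad_def)

lemma inv_quad_antimono:
  assumes "0 < lam" and le: "\<And>z. design_form lam h z z \<le> design_form lam h' z z"
  shows "inv_quad lam h' y \<le> inv_quad lam h y"
proof -
  define z where "z = matrix_inv (Vmat lam h') *v y"
  have "inv_quad lam h' y = 2 * (y \<bullet> z) - design_form lam h' z z"
    unfolding z_def by (rule inv_quad_variational_attained[OF assms(1)])
  also have "\<dots> \<le> 2 * (y \<bullet> z) - design_form lam h z z"
    using le[of z] by simp
  also have "\<dots> \<le> inv_quad lam h y"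
    by (rule inv_quad_ge_variational[OF assms(1)])
  finally show ?thesis .
qed

lemma inv_quad_le_inverse:
  assumes "0 < lam" "0 < n" and le: "\<And>z. n * (x \<bullet> z)\<^sup>2 \<le> design_form lam h z z"
  shows "inv_quad lam h x \<le> 1 / n"
proof -
  define z where "z = matrix_inv (Vmat lam h) *v x"
  define a where "a = x \<bullet> z"
  have "inv_quad lam h x \<le> 2 * a - n * a\<^sup>2"
    using inv_quad_variational_attained[OF assms(1), where h=h and y=x] le[of z]
    by (simp add: z_def a_def)
  also have "\<dots> \<le> 1 / n"
    using \<open>0 < n\<close> sum_squares_ge_zero[of "n * a - 1" 0]
    by (simp add: field_simps power2_eq_square)
  finally show ?thesis .
qed

lemma inv_quad_ridge_le:
  assumes "0 < lam"
  shows "inv_quad lam h (lam *\<^sub>R t) \<le> lam * (t \<bullet> t)"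
proof -
  define z where "z = matrix_inv (Vmat lam h) *v (lam *\<^sub>R t)"
  have "inv_quad lam h (lam *\<^sub>R t) = 2 * lam * (t \<bullet> z) - design_form lam h z z"
    unfolding z_def by (simp add: inv_quad_variational_attained[OF assms])
  also have "\<dots> \<le> lam * (2 * (t \<bullet> z) - z \<bullet> z)"
    using design_form_ge[where lam=lam and h=h and u=z] assms by (simp add: algebra_simps)
  also have "\<dots> \<le> lam * (t \<bullet> t)"
    using assms inner_ge_zero[of "t - z"]
    by (intro mult_left_mono) (auto simp: inner_diff_left inner_diff_right inner_commute)
  finally show ?thesis .
qed

lemma inv_quad_scaleR: "inv_quad lam h (a *\<^sub>R y) = a\<^sup>2 * inv_quad lam h y"
  by (simp add: inv_quad_def matrix_vector_mult_scaleR power2_eq_square)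

lemma inv_quad_add:
  assumes "0 < lam"
  shows "inv_quad lam h (a + b) =
    inv_quad lam h a + 2 * (b \<bullet> (matrix_inv (Vmat lam h) *v a)) + inv_quad lam h b"
  using inner_inv_Vmat_commute[OF assms, of a h b]
  by (simp add: inv_quad_def matrix_vector_right_distrib inner_add_left inner_add_right)

lemma inv_quad_diff_le:
  assumes "0 < lam"
  shows "inv_quad lam h (a - b) \<le> 2 * inv_quad lam h a + 2 * inv_quad lam h b"
  using inv_quad_add[OF assms, of h a b] inv_quad_add[OF assms, of h a "- b"]
    inv_quad_scaleR[of lam h "-1" b] inv_quad_nonneg[OF assms, of h "a + b"]
  by simp

lemma inv_quad_sum_le:
  assumes "0 < lam" "finite S"
  shows "inv_quad lam h (\<Sum>x\<in>S. a x) \<le> card S * (\<Sum>x\<in>S. inv_quad lam h (a x))"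
proof (cases "S = {}")
  case True
  then show ?thesis by (simp add: inv_quad_def)
next
  case False
  define n where "n = real (card S)"
  define z where "z = matrix_inv (Vmat lam h) *v (\<Sum>x\<in>S. a x)"
  have n: "0 < n"
    using False assms(2) by (simp add: n_def card_gt_0_iff)
  \<comment> \<open>Jensen: bound each \<open>inv_quad lam h (n *\<^sub>R a x)\<close> variationally at the common \<open>z\<close>\<close>
  have "inv_quad lam h (\<Sum>x\<in>S. a x) = (\<Sum>x\<in>S. 2 * (a x \<bullet> z)) - design_form lam h z z"
    unfolding z_def by (simp add: inv_quad_variational_attained[OF assms(1)] inner_sum_left sum_distrib_left)
  also have "\<dots> = (\<Sum>x\<in>S. (2 * ((n *\<^sub>R a x) \<bullet> z) - design_form lam h z z) / n)"
    using n by (simp add: sum_subtractf diff_divide_distrib n_def)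
  also have "\<dots> \<le> (\<Sum>x\<in>S. inv_quad lam h (n *\<^sub>R a x) / n)"
    using n by (intro sum_mono divide_right_mono inv_quad_ge_variational[OF assms(1)]) simp
  also have "\<dots> = n * (\<Sum>x\<in>S. inv_quad lam h (a x))"
    using n by (simp add: inv_quad_scaleR sum_distrib_left power2_eq_square)
  finally show ?thesis
    by (simp add: n_def)
qed

lemma inv_quad_Cauchy_Schwarz:
  assumes "0 < lam"
  shows "(x \<bullet> (matrix_inv (Vmat lam h) *v w))\<^sup>2 \<le> inv_quad lam h x * inv_quad lam h w"
proof -
  define b where "b = x \<bullet> (matrix_inv (Vmat lam h) *v w)"
  have quad: "0 \<le> inv_quad lam h x + 2 * t * b + t\<^sup>2 * inv_quad lam h w" for t
    using inv_quad_nonneg[OF assms, of h "x + t *\<^sub>R w"] inner_inv_Vmat_commute[OF assms, of x h w]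
    by (simp add: inv_quad_add[OF assms] inv_quad_scaleR b_def matrix_vector_mult_scaleR)
  show ?thesis
  proof (cases "inv_quad lam h w = 0")
    case True
    have "b = 0"
    proof (rule ccontr)
      assume "b \<noteq> 0"
      then show False
        using quad[of "- (inv_quad lam h x + 1) / (2 * b)"] True by (simp add: field_simps)
    qed
    then show ?thesis
      using True by (simp add: b_def)
  next
    case False
    then have q: "0 < inv_quad lam h w"
      using inv_quad_nonneg[OF assms, of h w] by simp
    have "0 \<le> inv_quad lam h x - b\<^sup>2 / inv_quad lam h w"
      using quad[of "- b / inv_quad lam h w"] q by (simp add: field_simps power2_eq_square)
    then show ?thesis
      using q by (simp add: b_def field_simps)
  qed
qed

section \<open>Widths of repeatedly played actions\<close>

definition times_played :: "'d hist \<Rightarrow> real^'d \<Rightarrow> nat \<Rightarrow> nat" where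
  "times_played h x i = card {l. l < i \<and> x \<in> fst (h ! l)}"

lemma times_played_0 [simp]: "times_played h x 0 = 0"
  by (simp add: times_played_def)

lemma times_played_Suc:
  "times_played h x (Suc i) = times_played h x i + (if x \<in> fst (h ! i) then 1 else 0)"
proof -
  have "{l. l < Suc i \<and> x \<in> fst (h ! l)} =
      {l. l < i \<and> x \<in> fst (h ! l)} \<union> (if x \<in> fst (h ! i) then {i} else {})"
    by (auto simp: less_Suc_eq)
  then show ?thesis
    by (simp add: times_played_def)
qed

lemma times_played_le: "times_played h x i \<le> i"
  by (induction i) (simp_all add: times_played_Suc)

lemma times_played_mono: "i \<le> j \<Longrightarrow> times_played h x i \<le> times_played h x j"
  by (induction j rule: dec_induct) (simp_all add: times_played_Suc)

lemma times_played_strict_mono: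
  assumes "i < j" "x \<in> fst (h ! i)"
  shows "times_played h x i < times_played h x j"
  using times_played_mono[of "Suc i" j h x] assms by (simp add: times_played_Suc)

lemma inj_on_times_played: "inj_on (times_played h x) {i. x \<in> fst (h ! i)}"
  by (rule inj_onI) (metis linorder_neqE_nat mem_Collect_eq times_played_strict_mono less_irrefl)

lemma design_form_take:
  "i \<le> length h \<Longrightarrow>
    design_form lam (take i h) u w = lam * (u \<bullet> w) + (\<Sum>l<i. \<Sum>x\<in>fst (h ! l). (x \<bullet> u) * (x \<bullet> w))"
  by (simp add: design_form_def min_def)

lemma design_form_take_mono:
  assumes "i \<le> j" "j \<le> length h"
  shows "design_form lam (take i h) z z \<le> design_form lam (take j h) z z"
proof -
  have "(\<Sum>l<i. \<Sum>x\<in>fst (h ! l). (x \<bullet> z) * (x \<bullet> z)) \<le> (\<Sum>l<j. \<Sum>x\<in>fst (h ! l). (x \<bullet> z) * (x \<bullet> z))"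
    using assms by (intro sum_mono2) (auto intro!: sum_nonneg)
  then show ?thesis
    using assms by (simp add: design_form_take)
qed

lemma times_played_le_design_form:
  assumes "i \<le> length h" "0 \<le> lam" "\<forall>l<length h. finite (fst (h ! l))"
  shows "times_played h x i * (x \<bullet> z)\<^sup>2 \<le> design_form lam (take i h) z z"
proof -
  have "times_played h x i * (x \<bullet> z)\<^sup>2 = (\<Sum>l<i. if x \<in> fst (h ! l) then (x \<bullet> z)\<^sup>2 else 0)"
    by (simp add: sum.If_cases times_played_def Collect_conj_eq lessThan_def Int_commute)
  also have "\<dots> \<le> (\<Sum>l<i. \<Sum>y\<in>fst (h ! l). (y \<bullet> z) * (y \<bullet> z))"
    using assms(1,3)
    by (intro sum_mono) (auto intro!: sum_nonneg member_le_sum[where f="\<lambda>y. (y \<bullet> z) * (y \<bullet> z)", simplified]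
        simp: power2_eq_square)
  also have "\<dots> \<le> design_form lam (take i h) z z"
    using assms by (simp add: design_form_take)
  finally show ?thesis .
qed

lemma inv_quad_le_inverse_times_played:
  assumes "0 < lam" "i \<le> length h" "\<forall>l<length h. finite (fst (h ! l))" "0 < times_played h x i"
  shows "inv_quad lam (take i h) x \<le> 1 / times_played h x i"
  using assms by (intro inv_quad_le_inverse times_played_le_design_form) auto

lemma card_wide_plays_le:
  assumes "0 < lam" "0 < tau" "\<forall>l<length h. finite (fst (h ! l))"
  shows "real (card {i. i < length h \<and> x \<in> fst (h ! i) \<and> tau \<le> inv_quad lam (take i h) x}) \<le> 1 / tau + 1"
proof -
  let ?J = "{i. i < length h \<and> x \<in> fst (h ! i) \<and> tau \<le> inv_quad lam (take i h) x}"
  let ?N = "nat \<lfloor>1 / tau\<rfloor>"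
  have image: "times_played h x ` ?J \<subseteq> {..?N}"
  proof clarify
    fix i
    assume i: "i < length h" "x \<in> fst (h ! i)" "tau \<le> inv_quad lam (take i h) x"
    show "times_played h x i \<le> ?N"
    proof (cases "times_played h x i = 0")
      case False
      then have "tau \<le> 1 / times_played h x i"
        using i(1,3) inv_quad_le_inverse_times_played[OF assms(1) _ assms(3), of i x] by linarith
      then have "real (times_played h x i) \<le> 1 / tau"
        using assms(2) False by (simp add: le_divide_eq mult.commute)
      then show ?thesis
        by (rule le_nat_floor)
    qed simp
  qed
  have "inj_on (times_played h x) ?J"
    by (rule inj_on_subset[OF inj_on_times_played]) blast
  then have "card ?J = card (times_played h x ` ?J)"
    by (simp add: card_image)
  also have "\<dots> \<le> Suc ?N"
    using card_mono[OF finite_atMost image] by simp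
  finally have "real (card ?J) \<le> real (Suc ?N)"
    by (simp only: of_nat_le_iff)
  moreover have "real ?N \<le> 1 / tau"
    using assms(2) by (intro of_nat_floor) simp
  ultimately show ?thesis
    by linarith
qed

lemma card_wide_rounds_le:
  assumes "0 < lam" "finite A" "\<forall>l<length h. fst (h ! l) \<subseteq> A" "0 < tau" "I \<subseteq> {..<length h}"
    and wide: "\<forall>i\<in>I. \<exists>y\<in>fst (h ! i). tau \<le> inv_quad lam (take i h) y"
  shows "real (card I) \<le> card A * (1 / tau + 1)"
proof -
  define J where "J x = {i. i < length h \<and> x \<in> fst (h ! i) \<and> tau \<le> inv_quad lam (take i h) x}" for x
  have fin: "\<forall>l<length h. finite (fst (h ! l))"
    using assms(2,3) finite_subset by blast
  have "I \<subseteq> (\<Union>x\<in>A. J x)"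
    using wide assms(3,5) unfolding J_def by fastforce
  moreover have "finite (\<Union>x\<in>A. J x)"
    using assms(2) unfolding J_def by auto
  ultimately have "card I \<le> card (\<Union>x\<in>A. J x)"
    by (rule card_mono[rotated])
  also have "\<dots> \<le> (\<Sum>x\<in>A. card (J x))"
    by (rule card_UN_le[OF assms(2)])
  finally have "real (card I) \<le> (\<Sum>x\<in>A. real (card (J x)))"
    by (metis of_nat_le_iff of_nat_sum)
  also have "\<dots> \<le> (\<Sum>x\<in>A. 1 / tau + 1)"
    unfolding J_def by (intro sum_mono card_wide_plays_le[OF assms(1,4) fin])
  finally show ?thesis
    by simp
qed

lemma sum_rounds_by_action:
  fixes n :: nat
  assumes "finite A" "\<forall>i<n. S i \<subseteq> A"
  shows "(\<Sum>i<n. \<Sum>x\<in>S i. g i x) = (\<Sum>x\<in>A. \<Sum>i\<in>{i. i < n \<and> x \<in> S i}. g i x)"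
proof -
  have "(\<Sum>i<n. \<Sum>x\<in>S i. g i x) = (\<Sum>i<n. \<Sum>x\<in>A. if x \<in> S i then g i x else 0)"
  proof (rule sum.cong[OF refl])
    fix i
    assume "i \<in> {..<n}"
    then have "{x \<in> A. x \<in> S i} = S i"
      using assms(2) by blast
    then show "(\<Sum>x\<in>S i. g i x) = (\<Sum>x\<in>A. if x \<in> S i then g i x else 0)"
      using sum.inter_filter[OF assms(1), of "g i" "\<lambda>x. x \<in> S i"] by simp
  qed
  also have "\<dots> = (\<Sum>x\<in>A. \<Sum>i<n. if x \<in> S i then g i x else 0)"
    by (rule sum.swap)
  also have "\<dots> = (\<Sum>x\<in>A. \<Sum>i\<in>{i. i < n \<and> x \<in> S i}. g i x)"
    by (rule sum.cong[OF refl], rule sum.mono_neutral_cong_right) auto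
  finally show ?thesis .
qed

text \<open>Elliptical potential: the \<open>m\<close>-th play of an action contributes at most \<open>1 / m\<close>, so
  each action contributes at most a harmonic number.\<close>

lemma sum_inv_quad_plays_le_harm:
  assumes "0 < lam" "\<forall>l<length h. finite (fst (h ! l))"
  shows "(\<Sum>i\<in>{i. i < length h \<and> x \<in> fst (h ! i)}. inv_quad lam (take (Suc i) h) x) \<le> harm (length h)"
proof -
  let ?J = "{i. i < length h \<and> x \<in> fst (h ! i)}"
  let ?m = "\<lambda>i. times_played h x (Suc i)"
  have m_eq: "?m i = Suc (times_played h x i)" if "i \<in> ?J" for i
    using that by (simp add: times_played_Suc)
  have "(\<Sum>i\<in>?J. inv_quad lam (take (Suc i) h) x) \<le> (\<Sum>i\<in>?J. 1 / real (?m i))"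
    using m_eq by (intro sum_mono inv_quad_le_inverse_times_played[OF assms(1) _ assms(2)]) auto
  also have "\<dots> = (\<Sum>m\<in>?m ` ?J. 1 / real m)"
  proof -
    have "inj_on ?m ?J"
      using inj_on_times_played[of h x] m_eq by (auto simp: inj_on_def)
    then show ?thesis
      by (simp add: sum.reindex)
  qed
  also have "\<dots> \<le> (\<Sum>m\<in>{1..length h}. 1 / real m)"
  proof (intro sum_mono2)
    show "?m ` ?J \<subseteq> {1..length h}"
    proof clarify
      fix i
      assume "i < length h" "x \<in> fst (h ! i)"
      then show "?m i \<in> {1..length h}"
        using m_eq[of i] times_played_le[of h x "Suc i"] by simp
    qed
  qed auto
  also have "\<dots> = harm (length h)"
    by (simp add: harm_def divide_inverse)
  finally show ?thesis .
qed

lemma elliptical_potential_le: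
  assumes "0 < lam" "finite A" "\<forall>l<length h. fst (h ! l) \<subseteq> A"
  shows "(\<Sum>i<length h. \<Sum>x\<in>fst (h ! i). inv_quad lam (take (Suc i) h) x) \<le> card A * harm (length h)"
proof -
  have fin: "\<forall>l<length h. finite (fst (h ! l))"
    using assms(2,3) finite_subset by blast
  have "(\<Sum>i<length h. \<Sum>x\<in>fst (h ! i). inv_quad lam (take (Suc i) h) x) =
      (\<Sum>x\<in>A. \<Sum>i\<in>{i. i < length h \<and> x \<in> fst (h ! i)}. inv_quad lam (take (Suc i) h) x)"
    by (rule sum_rounds_by_action[OF assms(2,3)])
  also have "\<dots> \<le> (\<Sum>x\<in>A. harm (length h))"
    by (intro sum_mono sum_inv_quad_plays_le_harm[OF assms(1) fin])
  finally show ?thesis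
    by simp
qed

section \<open>The history distribution\<close>

abbreviation reward_pmf :: "real^'d \<Rightarrow> (real^'d) set \<Rightarrow> (real^'d \<Rightarrow> bool) pmf" where
  "reward_pmf th S \<equiv> Pi_pmf S False (\<lambda>x. bernoulli_pmf (x \<bullet> th))"

definition follows_policy :: "('d hist \<Rightarrow> (real^'d) set) \<Rightarrow> 'd hist \<Rightarrow> bool" where
  "follows_policy pol h \<longleftrightarrow> (\<forall>i<length h. fst (h ! i) = pol (take i h))"

lemma hist_pmf_Suc_map:
  "hist_pmf th pol (Suc t) =
    hist_pmf th pol t \<bind> (\<lambda>h. map_pmf (\<lambda>r. h @ [(pol h, r)]) (reward_pmf th (pol h)))"
  by (simp add: map_pmf_def)

lemma set_hist_pmf:
  assumes "h \<in> set_pmf (hist_pmf th pol t)"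
  shows "length h = t \<and> follows_policy pol h"
  using assms
proof (induction t arbitrary: h)
  case (Suc t)
  then obtain h0 r where "h0 \<in> set_pmf (hist_pmf th pol t)" and h: "h = h0 @ [(pol h0, r)]"
    by (auto simp: hist_pmf_Suc_map)
  with Suc.IH show ?case
    by (auto simp: follows_policy_def nth_append less_Suc_eq)
qed (simp add: follows_policy_def)

lemma finite_set_Pi_pmf_bool:
  assumes "finite S"
  shows "finite (set_pmf (Pi_pmf S (False::bool) p))"
proof (rule finite_subset)
  show "set_pmf (Pi_pmf S False p) \<subseteq> PiE_dflt S False (set_pmf \<circ> p)"
    by (rule set_Pi_pmf_subset'[OF assms])
  show "finite (PiE_dflt S False (set_pmf \<circ> p))"
    using assms by (intro finite_PiE_dflt) (auto intro: finite_subset[of _ UNIV])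
qed

lemma finite_set_hist_pmf:
  assumes "\<forall>h. finite (pol h)"
  shows "finite (set_pmf (hist_pmf th pol t))"
  by (induction t) (use assms in \<open>auto simp: hist_pmf_Suc_map finite_set_Pi_pmf_bool\<close>)

lemma expectation_bind_pmf_finite:
  fixes F :: "'b \<Rightarrow> real"
  assumes "finite (set_pmf p)" "\<And>x. x \<in> set_pmf p \<Longrightarrow> finite (set_pmf (q x))"
  shows "measure_pmf.expectation (p \<bind> q) F =
    measure_pmf.expectation p (\<lambda>x. measure_pmf.expectation (q x) F)"
  using assms
  by (simp add: pmf_expectation_bind[of "set_pmf p"] integral_measure_pmf_real[of "set_pmf p"] mult.commute)

lemma expectation_hist_pmf_Suc:
  fixes F :: "'d::finite hist \<Rightarrow> real"
  assumes "\<forall>h. finite (pol h)"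
  shows "measure_pmf.expectation (hist_pmf th pol (Suc t)) F =
    measure_pmf.expectation (hist_pmf th pol t)
      (\<lambda>h. measure_pmf.expectation (reward_pmf th (pol h)) (\<lambda>r. F (h @ [(pol h, r)])))"
  unfolding hist_pmf_Suc_map
  using assms by (subst expectation_bind_pmf_finite) (auto simp: finite_set_hist_pmf finite_set_Pi_pmf_bool)

lemma expectation_reward_pmf:
  assumes "finite S" "x \<in> S" "0 \<le> x \<bullet> th" "x \<bullet> th \<le> 1"
  shows "measure_pmf.expectation (reward_pmf th S) (\<lambda>r. of_bool (r x) :: real) = x \<bullet> th"
proof -
  have "measure_pmf.expectation (reward_pmf th S) (\<lambda>r. of_bool (r x) :: real) =
      measure_pmf.expectation (map_pmf (\<lambda>r. r x) (reward_pmf th S)) of_bool"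
    by simp
  also have "\<dots> = x \<bullet> th"
    using assms by (simp add: Pi_pmf_component)
  finally show ?thesis .
qed

lemma expectation_centered_rewards:
  assumes "finite S" "\<forall>x\<in>S. 0 \<le> x \<bullet> th \<and> x \<bullet> th \<le> 1"
  shows "measure_pmf.expectation (reward_pmf th S) (\<lambda>r. \<Sum>x\<in>S. (of_bool (r x) - x \<bullet> th) * g x) = 0"
proof -
  have int: "integrable (reward_pmf th S) F" for F :: "_ \<Rightarrow> real"
    by (rule integrable_measure_pmf_finite[OF finite_set_Pi_pmf_bool[OF assms(1)]])
  show ?thesis
    using assms by (simp add: int expectation_reward_pmf)
qed

section \<open>The self-normalized reward noise\<close>

definition noise_sum :: "real^'d \<Rightarrow> 'd hist \<Rightarrow> real^'d" where
  "noise_sum th h = (\<Sum>i<length h. \<Sum>x\<in>fst (h ! i). (of_bool (snd (h ! i) x) - x \<bullet> th) *\<^sub>R x)"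

definition width_potential :: "real \<Rightarrow> 'd::finite hist \<Rightarrow> real" where
  "width_potential lam h = (\<Sum>i<length h. \<Sum>x\<in>fst (h ! i). inv_quad lam (take (Suc i) h) x)"

text \<open>A supermartingale: the one-step growth of the self-normalized noise is a centered term
  plus at most \<open>k\<close> times the growth of the potential.\<close>

definition noise_excess :: "real \<Rightarrow> real^'d \<Rightarrow> nat \<Rightarrow> 'd::finite hist \<Rightarrow> real" where
  "noise_excess lam th k h = inv_quad lam h (noise_sum th h) - k * width_potential lam h"

lemma Vmat_cong_actions:
  assumes "map fst h = map fst h'"
  shows "Vmat lam h = Vmat lam h'"
proof -
  have len: "length h = length h'"
    using arg_cong[OF assms, of length] by simp
  have "fst (h ! i) = fst (h' ! i)" if "i < length h" for i
    using arg_cong[OF assms, of "\<lambda>xs. xs ! i"] that len by simp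
  with len show ?thesis
    unfolding Vmat_def by (intro arg_cong2[where f="(+)"] refl sum.cong) auto
qed

lemma noise_sum_snoc:
  "noise_sum th (h @ [(S, r)]) = noise_sum th h + (\<Sum>x\<in>S. (of_bool (r x) - x \<bullet> th) *\<^sub>R x)"
  by (simp add: noise_sum_def nth_append)

lemma width_potential_snoc:
  "width_potential lam (h @ [(S, r)]) = width_potential lam h + (\<Sum>x\<in>S. inv_quad lam (h @ [(S, r)]) x)"
  by (simp add: width_potential_def nth_append)

lemma design_form_snoc:
  "design_form lam (h @ [(S, r)]) z z = design_form lam h z z + (\<Sum>x\<in>S. (x \<bullet> z) * (x \<bullet> z))"
  by (simp add: design_form_def nth_append)

text \<open>The cross term is measured in the geometry of the new design matrix, which depends on the
  new actions but not on their rewards (hence the dummy rewards in \<open>w\<close>); so it has mean zero.\<close>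

lemma noise_excess_snoc_le:
  fixes h :: "'d::finite hist"
  assumes "0 < lam" "finite S" "card S = k" "\<forall>x\<in>S. 0 \<le> x \<bullet> th \<and> x \<bullet> th \<le> 1"
  defines "w \<equiv> matrix_inv (Vmat lam (h @ [(S, \<lambda>_. False)])) *v noise_sum th h"
  shows "noise_excess lam th k (h @ [(S, r)]) \<le>
    noise_excess lam th k h + 2 * (\<Sum>x\<in>S. (of_bool (r x) - x \<bullet> th) * (x \<bullet> w))"
proof -
  let ?h' = "h @ [(S, r)]"
  define eta where "eta x = (of_bool (r x) - x \<bullet> th :: real)" for x
  define D where "D = (\<Sum>x\<in>S. eta x *\<^sub>R x)"
  have V: "Vmat lam ?h' = Vmat lam (h @ [(S, \<lambda>_. False)])"
    by (rule Vmat_cong_actions) simp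
  have expand: "inv_quad lam ?h' (noise_sum th ?h') =
      inv_quad lam ?h' (noise_sum th h) + 2 * (D \<bullet> w) + inv_quad lam ?h' D"
    by (simp add: noise_sum_snoc inv_quad_add[OF assms(1)] w_def V D_def eta_def)
  have old: "inv_quad lam ?h' (noise_sum th h) \<le> inv_quad lam h (noise_sum th h)"
    by (rule inv_quad_antimono[OF assms(1)]) (auto simp: design_form_snoc intro!: sum_nonneg)
  have new: "inv_quad lam ?h' D \<le> k * (\<Sum>x\<in>S. inv_quad lam ?h' x)"
  proof -
    have "inv_quad lam ?h' D \<le> k * (\<Sum>x\<in>S. (eta x)\<^sup>2 * inv_quad lam ?h' x)"
      using inv_quad_sum_le[OF assms(1,2), of ?h' "\<lambda>x. eta x *\<^sub>R x"]
      by (simp add: D_def inv_quad_scaleR assms(3))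
    also have "\<dots> \<le> k * (\<Sum>x\<in>S. inv_quad lam ?h' x)"
    proof (intro mult_left_mono sum_mono)
      fix x
      assume "x \<in> S"
      then have "(eta x)\<^sup>2 \<le> 1"
        using assms(4) by (auto simp: eta_def abs_square_le_1 of_bool_def)
      then show "(eta x)\<^sup>2 * inv_quad lam ?h' x \<le> inv_quad lam ?h' x"
        using inv_quad_nonneg[OF assms(1), of ?h' x] by (simp add: mult_left_le_one_le)
    qed simp
    finally show ?thesis .
  qed
  have "D \<bullet> w = (\<Sum>x\<in>S. (of_bool (r x) - x \<bullet> th) * (x \<bullet> w))"
    by (simp add: D_def eta_def inner_sum_left)
  then show ?thesis
    using expand old new by (simp add: noise_excess_def width_potential_snoc algebra_simps)
qed

lemma expectation_noise_excess_nonpos: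
  assumes "0 < lam" and pol: "\<forall>h. finite (pol h) \<and> card (pol h) = k \<and> (\<forall>x\<in>pol h. 0 \<le> x \<bullet> th \<and> x \<bullet> th \<le> 1)"
  shows "measure_pmf.expectation (hist_pmf th pol T) (noise_excess lam th k) \<le> 0"
proof (induction T)
  case 0
  then show ?case
    by (simp add: noise_excess_def width_potential_def noise_sum_def inv_quad_def)
next
  case (Suc T)
  have fin: "\<forall>h. finite (pol h)"
    using pol by blast
  have step: "measure_pmf.expectation (reward_pmf th (pol h)) (\<lambda>r. noise_excess lam th k (h @ [(pol h, r)]))
      \<le> noise_excess lam th k h" for h
  proof -
    define w where "w = matrix_inv (Vmat lam (h @ [(pol h, \<lambda>_. False)])) *v noise_sum th h"
    have int: "integrable (reward_pmf th (pol h)) F" for F :: "_ \<Rightarrow> real"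
      using fin by (intro integrable_measure_pmf_finite finite_set_Pi_pmf_bool) blast
    have "measure_pmf.expectation (reward_pmf th (pol h)) (\<lambda>r. noise_excess lam th k (h @ [(pol h, r)])) \<le>
        measure_pmf.expectation (reward_pmf th (pol h))
          (\<lambda>r. noise_excess lam th k h + 2 * (\<Sum>x\<in>pol h. (of_bool (r x) - x \<bullet> th) * (x \<bullet> w)))"
      using pol unfolding w_def by (intro integral_mono int noise_excess_snoc_le[OF assms(1)]) auto
    also have "\<dots> = noise_excess lam th k h"
      using expectation_centered_rewards[of "pol h" th "\<lambda>x. x \<bullet> w"] pol by (simp add: int)
    finally show ?thesis .
  qed
  have "measure_pmf.expectation (hist_pmf th pol (Suc T)) (noise_excess lam th k) \<le>
      measure_pmf.expectation (hist_pmf th pol T) (noise_excess lam th k)"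
    unfolding expectation_hist_pmf_Suc[OF fin]
    by (intro integral_mono integrable_measure_pmf_finite finite_set_hist_pmf[OF fin] step)
  with Suc.IH show ?case
    by linarith
qed

lemma expectation_self_normalized_noise_le:
  assumes "0 < lam" "finite A" "\<forall>x\<in>A. 0 \<le> x \<bullet> th \<and> x \<bullet> th \<le> 1"
    and pol: "\<forall>h. pol h \<subseteq> A \<and> card (pol h) = k"
  shows "measure_pmf.expectation (hist_pmf th pol T) (\<lambda>h. inv_quad lam h (noise_sum th h)) \<le> k * card A * harm T"
proof -
  have fin: "\<forall>h. finite (pol h)"
    using pol assms(2) finite_subset by blast
  have int: "integrable (hist_pmf th pol T) F" for F :: "_ \<Rightarrow> real"
    by (rule integrable_measure_pmf_finite[OF finite_set_hist_pmf[OF fin]])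
  have "measure_pmf.expectation (hist_pmf th pol T) (width_potential lam) \<le> card A * harm T"
  proof (intro measure_pmf.integral_le_const int AE_pmfI)
    fix h
    assume "h \<in> set_pmf (hist_pmf th pol T)"
    then have "length h = T" "\<forall>l<length h. fst (h ! l) \<subseteq> A"
      using set_hist_pmf pol unfolding follows_policy_def by metis+
    then show "width_potential lam h \<le> card A * harm T"
      unfolding width_potential_def using elliptical_potential_le[OF assms(1,2)] by blast
  qed
  moreover have "measure_pmf.expectation (hist_pmf th pol T) (noise_excess lam th k) \<le> 0"
    using pol assms(3) fin by (intro expectation_noise_excess_nonpos[OF assms(1)]) blast
  moreover have "(\<lambda>h. inv_quad lam h (noise_sum th h)) = (\<lambda>h. noise_excess lam th k h + k * width_potential lam h)"
    by (simp add: noise_excess_def)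
  ultimately show ?thesis
    by (simp add: int) (smt (verit) mult_left_mono of_nat_0_le_iff mult.assoc)
qed

section \<open>Estimation error\<close>

lemma theta_hat_error:
  fixes h :: "'d::finite hist"
  assumes "0 < lam"
  shows "theta_hat lam h - th = matrix_inv (Vmat lam h) *v (noise_sum th h - lam *\<^sub>R th)"
proof -
  define b where "b = (\<Sum>i<length h. \<Sum>x\<in>fst (h ! i). of_bool (snd (h ! i) x) *\<^sub>R x)"
  have "noise_sum th h - lam *\<^sub>R th = b - Vmat lam h *v th"
    by (simp add: noise_sum_def b_def Vmat_matrix_vector_mult scaleR_diff_left sum_subtractf)
  then show ?thesis
    by (simp add: matrix_vector_mult_diff_distrib Vmat_inverse_vec(2)[OF assms] theta_hat_def b_def)
qed

lemma rms_error_le: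
  fixes h :: "'d::finite hist"
  assumes "0 < lam" "finite A" "A \<noteq> {}" "\<forall>x\<in>A. inv_quad lam h x \<le> G" "norm th \<le> c'"
  shows "sqrt (1 / real (card A) * (\<Sum>x\<in>A. (x \<bullet> (theta_hat lam h - th))\<^sup>2))
    \<le> sqrt G * sqrt (2 * inv_quad lam h (noise_sum th h) + 2 * lam * c'\<^sup>2)"
proof -
  define R where "R = 2 * inv_quad lam h (noise_sum th h) + 2 * lam * c'\<^sup>2"
  have "th \<bullet> th \<le> c'\<^sup>2"
    using assms(5) by (simp add: power2_norm_eq_inner[symmetric] power_mono)
  then have "lam * (th \<bullet> th) \<le> lam * c'\<^sup>2"
    using assms(1) by simp
  then have R: "inv_quad lam h (noise_sum th h - lam *\<^sub>R th) \<le> R"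
    using inv_quad_diff_le[OF assms(1), of h "noise_sum th h" "lam *\<^sub>R th"]
      inv_quad_ridge_le[OF assms(1), of h th]
    unfolding R_def by linarith
  have G: "0 \<le> G"
    using assms(3,4) inv_quad_nonneg[OF assms(1)] by (meson ex_in_conv order_trans)
  have "(x \<bullet> (theta_hat lam h - th))\<^sup>2 \<le> G * R" if "x \<in> A" for x
  proof -
    have "(x \<bullet> (theta_hat lam h - th))\<^sup>2 \<le> inv_quad lam h x * inv_quad lam h (noise_sum th h - lam *\<^sub>R th)"
      unfolding theta_hat_error[OF assms(1)] by (rule inv_quad_Cauchy_Schwarz[OF assms(1)])
    also have "\<dots> \<le> G * R"
      using assms(4) that R G inv_quad_nonneg[OF assms(1)] by (intro mult_mono) auto
    finally show ?thesis .
  qed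
  then have "1 / real (card A) * (\<Sum>x\<in>A. (x \<bullet> (theta_hat lam h - th))\<^sup>2) \<le> 1 / real (card A) * (\<Sum>x\<in>A. G * R)"
    by (intro mult_left_mono sum_mono) auto
  also have "\<dots> = G * R"
    using assms(2,3) by simp
  finally show ?thesis
    by (simp add: real_sqrt_mult[symmetric] R_def)
qed

lemma expectation_sqrt_le:
  fixes X :: "'a \<Rightarrow> real"
  assumes "finite (set_pmf p)" "\<And>x. x \<in> set_pmf p \<Longrightarrow> 0 \<le> X x"
    and "measure_pmf.expectation p X \<le> B" "0 < B"
  shows "measure_pmf.expectation p (\<lambda>x. sqrt (X x)) \<le> sqrt B"
proof -
  have int: "integrable p F" for F :: "'a \<Rightarrow> real"
    by (rule integrable_measure_pmf_finite[OF assms(1)])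
  \<comment> \<open>tangent line of the concave \<open>sqrt\<close> at \<open>B\<close>\<close>
  have tangent: "sqrt (X x) \<le> (X x + B) / (2 * sqrt B)" if "x \<in> set_pmf p" for x
  proof -
    have "0 \<le> (sqrt (X x) - sqrt B)\<^sup>2"
      by simp
    then show ?thesis
      using assms(2)[OF that] assms(4) by (simp add: power2_eq_square field_simps)
  qed
  have "measure_pmf.expectation p (\<lambda>x. sqrt (X x)) \<le> measure_pmf.expectation p (\<lambda>x. (X x + B) / (2 * sqrt B))"
    by (intro integral_mono_AE int AE_pmfI tangent)
  also have "\<dots> = (measure_pmf.expectation p X + B) / (2 * sqrt B)"
    by (simp add: int)
  also have "\<dots> \<le> (B + B) / (2 * sqrt B)"
    using assms(3,4) by (intro divide_right_mono) auto
  also have "\<dots> = sqrt B"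
    using assms(4) by (simp add: field_simps)
  finally show ?thesis .
qed

lemma gap_bounds:
  assumes "finite A" "S \<subseteq> A" "card S = k" "\<forall>x\<in>A. 0 \<le> x \<bullet> th \<and> x \<bullet> th \<le> 1"
  shows "0 \<le> gap A k th S" and "gap A k th S \<le> k"
proof -
  let ?V = "(\<lambda>S. \<Sum>x\<in>S. x \<bullet> th) ` {S. S \<subseteq> A \<and> card S = k}"
  have V: "{(\<Sum>x\<in>S. x \<bullet> th) | S. S \<subseteq> A \<and> card S = k} = ?V"
    by auto
  have fin: "finite ?V"
    using assms(1) by (intro finite_imageI) (auto intro: finite_subset[of _ "Pow A"])
  have in_V: "(\<Sum>x\<in>S. x \<bullet> th) \<in> ?V"
    using assms(2,3) by auto
  have "(\<Sum>x\<in>S'. x \<bullet> th) \<le> k" if "S' \<subseteq> A" "card S' = k" for S'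
    using sum_mono[of S' "\<lambda>x. x \<bullet> th" "\<lambda>_. 1"] that assms(4) by auto
  then have "opt_val A k th \<le> k"
    unfolding opt_val_def V using fin in_V by (subst Max_le_iff) auto
  moreover have "(\<Sum>x\<in>S. x \<bullet> th) \<le> opt_val A k th"
    unfolding opt_val_def V using fin in_V by (rule Max_ge)
  moreover have "0 \<le> (\<Sum>x\<in>S. x \<bullet> th)"
    using assms(2,4) by (intro sum_nonneg) auto
  ultimately show "0 \<le> gap A k th S" "gap A k th S \<le> k"
    unfolding gap_def by linarith+
qed

lemma harm_le_ln_plus_1: "1 \<le> T \<Longrightarrow> harm T \<le> ln (real T) + (1::real)"
  using decseq_harm_diff_ln[unfolded decseq_def, rule_format, of 0 "T - 1"]
  by (simp add: harm_def)

lemma rmse_nonneg: "0 \<le> rmse A lam th pol T"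
  unfolding rmse_def by (intro integral_nonneg_AE AE_pmfI) (auto intro!: divide_nonneg_nonneg sum_nonneg)

section \<open>Soft-O bookkeeping\<close>

lemma sqrt_bigo_powr:
  assumes "1 / 2 \<le> a"
  shows "(\<lambda>T::nat. sqrt (real T)) \<in> O(\<lambda>T. real T powr a)"
proof (rule bigoI[where c = 1])
  show "\<forall>\<^sub>F T in sequentially. norm (sqrt (real T)) \<le> 1 * norm (real T powr a)"
    using eventually_ge_at_top[of "1::nat"]
  proof eventually_elim
    case (elim T)
    then have "real T powr (1 / 2) \<le> real T powr a"
      using assms by (intro powr_mono) auto
    then show ?case
      by (simp add: powr_half_sqrt)
  qed
qed

lemma bigo_mult_ln_power: "F \<in> O(g) \<Longrightarrow> F \<in> O(\<lambda>T::nat. g T * ln (real T) ^ p)"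
proof -
  assume F: "F \<in> O(g)"
  have "(\<lambda>_. 1) \<in> O(\<lambda>T::nat. ln (real T) ^ p)"
  proof (rule bigoI[where c = 1])
    show "\<forall>\<^sub>F T in sequentially. norm (1::real) \<le> 1 * norm (ln (real T) ^ p)"
      using eventually_ge_at_top[of "3::nat"]
    proof eventually_elim
      case (elim T)
      then have "exp 1 \<le> real T"
        using exp_le by linarith
      then have "1 \<le> ln (real T)"
        using elim by (subst ln_ge_iff) auto
      then show ?case
        by (simp add: one_le_power)
    qed
  qed
  from landau_o.big.mult[OF F this] show ?thesis
    by simp
qed

lemma softO_add_bigo: "F \<in> softO g \<Longrightarrow> G \<in> O(g) \<Longrightarrow> (\<lambda>T. F T + G T) \<in> softO g"
  unfolding softO_def using sum_in_bigo(1) bigo_mult_ln_power by blast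

lemma softO_bigo_trans:
  assumes "F \<in> softO g" "g \<in> O(g')"
  shows "F \<in> softO g'"
proof -
  obtain p where "F \<in> O(\<lambda>T. g T * ln (real T) ^ p)"
    using assms(1) unfolding softO_def by blast
  moreover have "(\<lambda>T. g T * ln (real T) ^ p) \<in> O(\<lambda>T. g' T * ln (real T) ^ p)"
    using assms(2) by (rule landau_o.big.mult_right)
  ultimately show ?thesis
    unfolding softO_def by (blast intro: landau_o.big_trans)
qed

lemma bigo_scaled_powr_plus_const:
  fixes e c u :: real
  assumes "0 < e" "0 < c"
  shows "(\<lambda>T::nat. u * (real T powr e / c + 1)) \<in> O(\<lambda>T. real T powr e)"
  using assms by real_asymp

lemma bigo_rmse_bound:
  fixes a b c d :: real
  assumes "0 < a" "0 < b" "0 < c" "0 \<le> d"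
  shows "(\<lambda>T::nat. sqrt (a / real T powr (2 * b)) * sqrt (c * (ln (real T) + 1) + d))
    \<in> O(\<lambda>T. real T powr (- b) * ln (real T))"
  using assms by real_asymp

section \<open>Analysis of InfluenceCB\<close>

lemma divide_powr_squared:
  fixes C t b :: real
  shows "(C / t powr b)\<^sup>2 = C\<^sup>2 / t powr (2 * b)"
  by (simp add: power_divide power2_eq_square powr_add[symmetric])

lemma powr_le_twice:
  fixes T t :: real
  assumes "0 \<le> T" "T \<le> 2 * t" "0 \<le> e" "e \<le> 1"
  shows "T powr e \<le> 2 * t powr e"
proof -
  have "T powr e \<le> (2 * t) powr e"
    using assms by (intro powr_mono2) auto
  also have "\<dots> = 2 powr e * t powr e"
    using assms by (simp add: powr_mult)
  also have "\<dots> \<le> 2 * t powr e"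
    using assms powr_mono[of e 1 2] by (intro mult_right_mono) auto
  finally show ?thesis .
qed

lemma half_le_card_upper_half: "real n / 2 \<le> real (card {n div 2..<n})"
proof -
  have "2 * (n div 2) \<le> n"
    by presburger
  then have "2 * real (n div 2) \<le> real n"
    using of_nat_mono by fastforce
  moreover have "real (card {n div 2..<n}) = real n - real (n div 2)"
    by (simp add: of_nat_diff)
  ultimately show ?thesis
    by linarith
qed

locale influenceCB_setting =
  fixes A :: "(real^'d) set" and k :: nat and lam C beta :: real
    and f pol :: "'d hist \<Rightarrow> (real^'d) set"
  assumes finite_A: "finite A"
    and k_pos: "1 \<le> k" and k_le_card: "k \<le> card A"
    and lam_pos: "0 < lam" and C_pos: "0 < C"
    and beta_nonneg: "0 \<le> beta" and beta_le: "beta \<le> 1/2"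
    and f_selects: "\<forall>h. f h \<subseteq> A \<and> card (f h) = k"
    and policy: "influenceCB A k lam C beta f pol"
begin

lemma pol_selects: "pol h \<subseteq> A \<and> card (pol h) = k"
  using policy f_selects unfolding influenceCB_def top_k_def by metis

lemma finite_pol: "finite (pol h)"
  using pol_selects finite_A finite_subset by blast

lemma card_A_pos: "0 < card A"
  using k_pos k_le_card by linarith

lemma round_subset_A: "follows_policy pol h \<Longrightarrow> i < length h \<Longrightarrow> fst (h ! i) \<subseteq> A"
  using pol_selects unfolding follows_policy_def by metis

lemma explore_covers:
  assumes "explore A lam C beta h" "x \<in> A"
  shows "\<exists>y\<in>pol h. inv_quad lam h x \<le> inv_quad lam h y"
proof -
  have top: "top_k A k (Ucb lam h) (pol h)"
    using policy assms(1) unfolding influenceCB_def by blast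
  then have "pol h \<noteq> {}"
    using k_pos unfolding top_k_def by auto
  then show ?thesis
    using top assms(2) unfolding top_k_def Ucb_eq_sqrt_inv_quad by (cases "x \<in> pol h") auto
qed

lemma explore_iff_wide: "explore A lam C beta h \<longleftrightarrow>
    (\<exists>x\<in>A. (C / real (length h + 1) powr beta)\<^sup>2 < inv_quad lam h x)"
proof -
  have pos: "0 < C / real (length h + 1) powr beta"
    using C_pos by simp
  have "explore A lam C beta h \<longleftrightarrow> (\<exists>x\<in>A. C / real (length h + 1) powr beta < Ucb lam h x)"
    unfolding explore_def using finite_A card_A_pos by (subst Max_gr_iff) auto
  also have "\<dots> \<longleftrightarrow> (\<exists>x\<in>A. (C / real (length h + 1) powr beta)\<^sup>2 < inv_quad lam h x)"
    unfolding Ucb_eq_sqrt_inv_quad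
    by (metis pos abs_of_pos real_sqrt_abs real_sqrt_less_iff)
  finally show ?thesis .
qed

lemma card_explore_rounds_le:
  assumes "follows_policy pol h"
  shows "real (card {i. i < length h \<and> explore A lam C beta (take i h)})
    \<le> card A * (real (length h) powr (2 * beta) / C\<^sup>2 + 1)"
proof (cases "length h = 0")
  case False
  define tau where "tau = C\<^sup>2 / real (length h) powr (2 * beta)"
  have tau: "0 < tau"
    using False C_pos by (simp add: tau_def)
  have "\<exists>y\<in>fst (h ! i). tau \<le> inv_quad lam (take i h) y"
    if i: "i < length h" "explore A lam C beta (take i h)" for i
  proof -
    obtain x where x: "x \<in> A" "(C / real (i + 1) powr beta)\<^sup>2 < inv_quad lam (take i h) x"
      using i explore_iff_wide by (auto simp: min_def)
    then obtain y where y: "y \<in> pol (take i h)" "inv_quad lam (take i h) x \<le> inv_quad lam (take i h) y"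
      using explore_covers i(2) by blast
    have "tau \<le> (C / real (i + 1) powr beta)\<^sup>2"
      unfolding tau_def divide_powr_squared
      using i(1) C_pos beta_nonneg by (intro divide_left_mono powr_mono2 mult_pos_pos) auto
    with x y show ?thesis
      using assms i(1) unfolding follows_policy_def by force
  qed
  moreover have "\<forall>l<length h. fst (h ! l) \<subseteq> A"
    using round_subset_A[OF assms] by blast
  ultimately have "real (card {i. i < length h \<and> explore A lam C beta (take i h)}) \<le> card A * (1 / tau + 1)"
    by (intro card_wide_rounds_le[OF lam_pos finite_A _ tau]) auto
  then show ?thesis
    by (simp add: tau_def)
qed simp

text \<open>If an action is still wide at time \<open>T\<close>, it was wide enough to trigger exploration in every
  round of the second half \<open>[T/2, T)\<close>, and some explored action was at least as wide.\<close>

lemma wide_late_round: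
  assumes "follows_policy pol h" "x \<in> A" "i < length h" "length h \<le> 2 * (i + 1)"
    and wide: "2 * C\<^sup>2 / real (length h) powr (2 * beta) < inv_quad lam h x"
  shows "\<exists>y\<in>fst (h ! i). inv_quad lam h x \<le> inv_quad lam (take i h) y"
proof -
  have shrink: "inv_quad lam h x \<le> inv_quad lam (take i h) x"
    using inv_quad_antimono[OF lam_pos design_form_take_mono[of i "length h" h lam], of x] assms(3)
    by simp
  have "real (length h) powr (2 * beta) \<le> 2 * real (i + 1) powr (2 * beta)"
    using assms(4) beta_nonneg beta_le by (intro powr_le_twice) auto
  then have "2 * C\<^sup>2 / (2 * real (i + 1) powr (2 * beta)) \<le> 2 * C\<^sup>2 / real (length h) powr (2 * beta)"
    using assms(3) by (intro divide_left_mono mult_pos_pos) auto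
  then have "(C / real (i + 1) powr beta)\<^sup>2 \<le> 2 * C\<^sup>2 / real (length h) powr (2 * beta)"
    unfolding divide_powr_squared by simp
  with wide shrink have "(C / real (length (take i h) + 1) powr beta)\<^sup>2 < inv_quad lam (take i h) x"
    using assms(3) by simp
  then have "explore A lam C beta (take i h)"
    using explore_iff_wide assms(2) by blast
  then obtain y where "y \<in> pol (take i h)" "inv_quad lam (take i h) x \<le> inv_quad lam (take i h) y"
    using explore_covers assms(2) by blast
  moreover have "pol (take i h) = fst (h ! i)"
    using assms(1,3) unfolding follows_policy_def by simp
  ultimately show ?thesis
    using shrink by (intro bexI[of _ y]) auto
qed

lemma card_late_rounds_le:
  assumes "follows_policy pol h" "x \<in> A"
    and wide: "2 * C\<^sup>2 / real (length h) powr (2 * beta) < inv_quad lam h x"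
  shows "real (length h) / 2 \<le> card A * (1 / inv_quad lam h x + 1)"
proof -
  have "0 \<le> 2 * C\<^sup>2 / real (length h) powr (2 * beta)"
    by simp
  with wide have q: "0 < inv_quad lam h x"
    by linarith
  have "\<forall>i\<in>{length h div 2..<length h}. \<exists>y\<in>fst (h ! i). inv_quad lam h x \<le> inv_quad lam (take i h) y"
    using wide_late_round[OF assms(1,2) _ _ wide] by auto
  then have "real (card {length h div 2..<length h}) \<le> card A * (1 / inv_quad lam h x + 1)"
    by (intro card_wide_rounds_le[OF lam_pos finite_A _ q]) (auto simp: round_subset_A[OF assms(1)])
  moreover have "real (length h) / 2 \<le> real (card {length h div 2..<length h})"
    by (rule half_le_card_upper_half)
  ultimately show ?thesis
    by linarith
qed

lemma inv_quad_decay: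
  assumes "follows_policy pol h" "4 * card A \<le> length h" "x \<in> A"
  shows "inv_quad lam h x \<le> (2 * C\<^sup>2 + 4 * real (card A)) / real (length h) powr (2 * beta)"
proof (rule ccontr)
  define T M q where "T = real (length h)" and "M = real (card A)" and "q = inv_quad lam h x"
  assume "\<not> ?thesis"
  then have q: "(2 * C\<^sup>2 + 4 * M) / T powr (2 * beta) < q"
    by (simp add: T_def M_def q_def)
  have "0 < length h"
    using assms(2) card_A_pos by linarith
  then have T: "4 * M \<le> T" "0 < T" "1 \<le> T"
    using assms(2) unfolding T_def M_def by (simp_all add: Suc_le_eq)
  have TB: "0 < T powr (2 * beta)" "T powr (2 * beta) \<le> T"
    using T(2) powr_mono[of "2 * beta" 1 T, OF _ T(3)] beta_le by simp_all
  have "2 * C\<^sup>2 / T powr (2 * beta) \<le> (2 * C\<^sup>2 + 4 * M) / T powr (2 * beta)"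
    using TB by (intro divide_right_mono) (auto simp: M_def)
  moreover have "4 * M / T \<le> (2 * C\<^sup>2 + 4 * M) / T powr (2 * beta)"
    using TB by (intro frac_le) (auto simp: M_def)
  ultimately have "2 * C\<^sup>2 / T powr (2 * beta) < q" "4 * M / T < q"
    using q by linarith+
  then have "T / 2 \<le> M / q + M"
    using card_late_rounds_le[OF assms(1,3)] by (simp add: T_def M_def q_def algebra_simps)
  then have "T / 4 \<le> M / q"
    using T(1) by linarith
  moreover have "0 < q"
    using \<open>2 * C\<^sup>2 / T powr (2 * beta) < q\<close> TB(1) by (smt (verit) divide_nonneg_pos zero_le_power2)
  ultimately have "T * q \<le> 4 * M"
    by (simp add: field_simps)
  then show False
    using \<open>4 * M / T < q\<close> T(2) by (simp add: field_simps)
qed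

lemma integrable_hist_pmf: "integrable (hist_pmf th pol T) (F :: 'd hist \<Rightarrow> real)"
  using finite_pol by (intro integrable_measure_pmf_finite finite_set_hist_pmf) blast

lemma regret_minus_exploit_regret:
  "regret A k th pol T - exploit_regret A k lam C beta th pol T =
    measure_pmf.expectation (hist_pmf th pol T)
      (\<lambda>h. \<Sum>i<length h. if explore A lam C beta (take i h) then gap A k th (fst (h ! i)) else 0)"
proof -
  have "(\<Sum>i<length h. gap A k th (fst (h ! i))) =
      (\<Sum>i<length h. if explore A lam C beta (take i h) then gap A k th (fst (h ! i)) else 0) +
      (\<Sum>i<length h. if explore A lam C beta (take i h) then 0 else gap A k th (fst (h ! i)))" for h
    by (subst sum.distrib[symmetric]) (rule sum.cong; simp)
  then show ?thesis
    unfolding regret_def exploit_regret_def by (simp add: integrable_hist_pmf)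
qed

lemma exploration_regret_bounds:
  assumes "\<forall>x\<in>A. 0 \<le> x \<bullet> th \<and> x \<bullet> th \<le> 1"
  shows "0 \<le> regret A k th pol T - exploit_regret A k lam C beta th pol T"
    and "regret A k th pol T - exploit_regret A k lam C beta th pol T
      \<le> k * card A * (real T powr (2 * beta) / C\<^sup>2 + 1)"
proof -
  define E where "E h = (\<Sum>i<length h. if explore A lam C beta (take i h) then gap A k th (fst (h ! i)) else 0)"
    for h
  have "0 \<le> E h \<and> E h \<le> k * card A * (real T powr (2 * beta) / C\<^sup>2 + 1)"
    if "h \<in> set_pmf (hist_pmf th pol T)" for h
  proof -
    have len: "length h = T" and fol: "follows_policy pol h"
      using set_hist_pmf[OF that] by auto
    have gap: "0 \<le> gap A k th (fst (h ! i)) \<and> gap A k th (fst (h ! i)) \<le> k" if "i < T" for i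
      using gap_bounds[OF finite_A _ _ assms] pol_selects fol that len unfolding follows_policy_def by metis
    have "E h \<le> (\<Sum>i<T. if explore A lam C beta (take i h) then real k else 0)"
      unfolding E_def len using gap by (intro sum_mono) auto
    also have "\<dots> = (\<Sum>i\<in>{i \<in> {..<T}. explore A lam C beta (take i h)}. real k)"
      by (rule sum.inter_filter[symmetric]) simp
    also have "\<dots> = real k * real (card {i. i < length h \<and> explore A lam C beta (take i h)})"
      by (simp add: len)
    also have "\<dots> \<le> real k * (card A * (real T powr (2 * beta) / C\<^sup>2 + 1))"
      using card_explore_rounds_le[OF fol] len by (intro mult_left_mono) auto
    finally show ?thesis
      unfolding E_def len using gap by (auto intro!: sum_nonneg)
  qed
  then show "0 \<le> regret A k th pol T - exploit_regret A k lam C beta th pol T"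
    and "regret A k th pol T - exploit_regret A k lam C beta th pol T
      \<le> k * card A * (real T powr (2 * beta) / C\<^sup>2 + 1)"
    unfolding regret_minus_exploit_regret E_def[symmetric]
    by (auto intro!: integral_nonneg_AE measure_pmf.integral_le_const integrable_hist_pmf AE_pmfI)
qed

lemma expectation_noise_quad_le:
  assumes "\<forall>x\<in>A. 0 \<le> x \<bullet> th \<and> x \<bullet> th \<le> 1" "1 \<le> T"
  shows "measure_pmf.expectation (hist_pmf th pol T) (\<lambda>h. inv_quad lam h (noise_sum th h))
    \<le> k * card A * (ln (real T) + 1)"
proof -
  have "measure_pmf.expectation (hist_pmf th pol T) (\<lambda>h. inv_quad lam h (noise_sum th h)) \<le> k * card A * harm T"
    using pol_selects assms(1) by (intro expectation_self_normalized_noise_le[OF lam_pos finite_A]) auto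
  also have "\<dots> \<le> k * card A * (ln (real T) + 1)"
    using harm_le_ln_plus_1[OF assms(2)] by (intro mult_left_mono) auto
  finally show ?thesis .
qed

lemma rmse_le:
  assumes "\<forall>x\<in>A. 0 \<le> x \<bullet> th \<and> x \<bullet> th \<le> 1" "norm th \<le> c'" "4 * card A \<le> T"
  shows "rmse A lam th pol T \<le> sqrt ((2 * C\<^sup>2 + 4 * real (card A)) / real T powr (2 * beta)) *
    sqrt (2 * real k * real (card A) * (ln (real T) + 1) + 2 * lam * c'\<^sup>2)"
proof -
  define G where "G = (2 * C\<^sup>2 + 4 * real (card A)) / real T powr (2 * beta)"
  define B where "B = 2 * real k * real (card A) * (ln (real T) + 1) + 2 * lam * c'\<^sup>2"
  define X where "X = (\<lambda>h. 2 * inv_quad lam h (noise_sum th h) + 2 * lam * c'\<^sup>2)"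
  have T: "1 \<le> T"
    using assms(3) card_A_pos by linarith
  have "rmse A lam th pol T \<le> measure_pmf.expectation (hist_pmf th pol T) (\<lambda>h. sqrt G * sqrt (X h))"
    unfolding rmse_def
  proof (intro integral_mono_AE integrable_hist_pmf AE_pmfI)
    fix h
    assume "h \<in> set_pmf (hist_pmf th pol T)"
    then have "length h = T" "follows_policy pol h"
      using set_hist_pmf by auto
    then have "\<forall>x\<in>A. inv_quad lam h x \<le> G"
      using inv_quad_decay assms(3) unfolding G_def by auto
    then show "sqrt (1 / real (card A) * (\<Sum>x\<in>A. (x \<bullet> (theta_hat lam h - th))\<^sup>2)) \<le> sqrt G * sqrt (X h)"
      unfolding X_def using card_A_pos by (intro rms_error_le[OF lam_pos finite_A _ _ assms(2)]) auto
  qed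
  also have "\<dots> = sqrt G * measure_pmf.expectation (hist_pmf th pol T) (\<lambda>h. sqrt (X h))"
    by simp
  also have "\<dots> \<le> sqrt G * sqrt B"
  proof (intro mult_left_mono expectation_sqrt_le)
    show "finite (set_pmf (hist_pmf th pol T))"
      using finite_pol by (intro finite_set_hist_pmf) blast
    show "0 \<le> X h" for h
      unfolding X_def using inv_quad_nonneg[OF lam_pos] lam_pos
      by (intro add_nonneg_nonneg mult_nonneg_nonneg) auto
    show "measure_pmf.expectation (hist_pmf th pol T) X \<le> B"
      using expectation_noise_quad_le[OF assms(1) T] by (simp add: X_def B_def integrable_hist_pmf)
    have "0 \<le> ln (real T)"
      using T by simp
    then have "0 < 2 * real k * real (card A) * (ln (real T) + 1)"
      using k_pos card_A_pos by (intro mult_pos_pos) auto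
    then show "0 < B"
      using lam_pos unfolding B_def by (simp add: add_pos_nonneg)
  qed (simp add: G_def)
  finally show ?thesis
    by (simp add: G_def B_def)
qed

lemma exploration_regret_bigo:
  assumes "\<forall>x\<in>A. 0 \<le> x \<bullet> th \<and> x \<bullet> th \<le> 1" "0 < beta"
  shows "(\<lambda>T. regret A k th pol T - exploit_regret A k lam C beta th pol T) \<in> O(\<lambda>T. real T powr (2 * beta))"
proof -
  have "(\<lambda>T. regret A k th pol T - exploit_regret A k lam C beta th pol T)
      \<in> O(\<lambda>T. real (k * card A) * (real T powr (2 * beta) / C\<^sup>2 + 1))"
    using exploration_regret_bounds[OF assms(1)] by (intro bigoI[where c = 1] always_eventually) auto
  also have "(\<lambda>T. real (k * card A) * (real T powr (2 * beta) / C\<^sup>2 + 1)) \<in> O(\<lambda>T. real T powr (2 * beta))"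
    using assms(2) C_pos by (intro bigo_scaled_powr_plus_const) auto
  finally show ?thesis .
qed

lemma rmse_bigo:
  assumes "\<forall>x\<in>A. 0 \<le> x \<bullet> th \<and> x \<bullet> th \<le> 1" "norm th \<le> c'" "0 < beta"
  shows "rmse A lam th pol \<in> O(\<lambda>T. real T powr (- beta) * ln (real T))"
proof -
  let ?R = "\<lambda>T::nat. sqrt ((2 * C\<^sup>2 + 4 * real (card A)) / real T powr (2 * beta)) *
    sqrt (2 * real k * real (card A) * (ln (real T) + 1) + 2 * lam * c'\<^sup>2)"
  have "rmse A lam th pol \<in> O(?R)"
  proof (rule bigoI[where c = 1])
    show "\<forall>\<^sub>F T in sequentially. norm (rmse A lam th pol T) \<le> 1 * norm (?R T)"
      using eventually_ge_at_top[of "4 * card A"]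
    proof eventually_elim
      case (elim T)
      then show ?case
        using rmse_le[OF assms(1,2) elim] rmse_nonneg[of A lam th pol T] abs_ge_self[of "?R T"] by simp
    qed
  qed
  also have "?R \<in> O(\<lambda>T. real T powr (- beta) * ln (real T))"
    using assms(3) C_pos k_pos card_A_pos lam_pos by (intro bigo_rmse_bound add_pos_nonneg) auto
  finally show ?thesis .
qed

end

theorem theorem2:
  fixes A :: "(real^'d) set" and th :: "real^'d"
    and k :: nat and lam c c' C beta :: real
    and f pol :: "'d hist \<Rightarrow> (real^'d) set"
  assumes finA: "finite A"
    and spanA: "span A = UNIV"
    and normA: "\<forall>x\<in>A. norm x \<le> c"
    and normth: "norm th \<le> c'"
    and mean01: "\<forall>x\<in>A. 0 \<le> x \<bullet> th \<and> x \<bullet> th \<le> 1"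
    and k: "1 \<le> k" "k \<le> card A"
    and lam: "lam > 0"
    and C: "C > 0"
    and beta: "1/4 \<le> beta" "beta \<le> 1/2"
    and f_valid: "\<forall>h. f h \<subseteq> A \<and> card (f h) = k"
    and f_regret: "exploit_regret A k lam C beta th pol \<in> softO (\<lambda>T. sqrt (real T))"
    and alg: "influenceCB A k lam C beta f pol"
  shows "regret A k th pol \<in> softO (\<lambda>T. real T powr (2 * beta)) \<and>
         rmse A lam th pol \<in> softO (\<lambda>T. real T powr (- beta))"
proof
  interpret influenceCB_setting A k lam C beta f pol
    using finA k lam C beta f_valid alg by unfold_locales auto
  have beta_pos: "0 < beta"
    using beta by simp
  have "exploit_regret A k lam C beta th pol \<in> softO (\<lambda>T. real T powr (2 * beta))"
    using f_regret sqrt_bigo_powr[of "2 * beta"] beta by (auto intro: softO_bigo_trans)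
  from softO_add_bigo[OF this exploration_regret_bigo[OF mean01 beta_pos]]
  show "regret A k th pol \<in> softO (\<lambda>T. real T powr (2 * beta))"
    by simp
  show "rmse A lam th pol \<in> softO (\<lambda>T. real T powr (- beta))"
    using rmse_bigo[OF mean01 normth beta_pos] unfolding softO_def by (intro CollectI exI[where x = 1]) simp
qed

end
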